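(* Let $\gamma_0>-1$, let $\Theta=(-1,+\infty)\times\mathbb{R}\times(0,+\infty)$ and $\theta_0=(\gamma_0,0,1)$. For all $\theta=(\gamma,\mu,\sigma)\in\Theta$, \[ G_{\gamma_0}[\ell_\theta]\leq G_{\gamma_0}[\ell_{\theta_0}], \] with equality if and only if $\theta=\theta_0$. Here $G_{\gamma_0}[f]=\int f\,dG_{\gamma_0}$.
   Context: For $\gamma\in\mathbb{R}$, $G_\gamma$ denotes the generalized extreme value distribution with distribution function $F_\gamma(x)=\exp(-(1+\gamma x)^{-1/\gamma})$ for $1+\gamma x>0$ (interpreted as $\exp(-e^{-x})$ when $\gamma=0$). The GEV log-likelihood is $\ell_\gamma(x)=-(1+1/\gamma)\log(1+\gamma x)-(1+\gamma x)^{-1/\gamma}$ if $1+\gamma x>0$ and $-\infty$ otherwise, with $\ell_0(x)=-x-e^{-x}$; for $\theta=(\gamma,\mu,\sigma)$ with $\sigma>0$, $\ell_\theta(x)=\ell_\gamma\big(\frac{x-\mu}{\sigma}\big)-\log\sigma$ (the log-density of the GEV law with shape $\gamma$, location $\mu$, scale $\sigma$). *)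

theory Defs
  imports "HOL-Analysis.Analysis"
begin

definition gev_cdf :: "real \<Rightarrow> real \<Rightarrow> real" where
  "gev_cdf \<gamma> x =
     (if \<gamma> = 0 then exp (- exp (- x))
      else if 1 + \<gamma> * x > 0 then exp (- ((1 + \<gamma> * x) powr (- 1 / \<gamma>)))
      else if \<gamma> > 0 then 0 else 1)"

definition GEV :: "real \<Rightarrow> real measure" where
  "GEV \<gamma> = interval_measure (gev_cdf \<gamma>)"

definition gev_loglik :: "real \<Rightarrow> real \<Rightarrow> ereal" where
  "gev_loglik \<gamma> x =
     (if \<gamma> = 0 then ereal (- x - exp (- x))
      else if 1 + \<gamma> * x > 0
        then ereal (- (1 + 1 / \<gamma>) * ln (1 + \<gamma> * x) - (1 + \<gamma> * x) powr (- 1 / \<gamma>))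
      else - \<infinity>)"

definition gev_loglik_param :: "real \<times> real \<times> real \<Rightarrow> real \<Rightarrow> ereal" where
  "gev_loglik_param \<theta> x =
     (case \<theta> of (\<gamma>, \<mu>, \<sigma>) \<Rightarrow> gev_loglik \<gamma> ((x - \<mu>) / \<sigma>) - ereal (ln \<sigma>))"

text \<open>Integral of an extended-real-valued function: positive part minus negative part
  (well defined in [-infinity, infinity) whenever the positive part is finite).\<close>
definition ext_integral :: "real measure \<Rightarrow> (real \<Rightarrow> ereal) \<Rightarrow> ereal" where
  "ext_integral M f =
     enn2ereal (\<integral>\<^sup>+ x. e2ennreal (max 0 (f x)) \<partial>M)
     - enn2ereal (\<integral>\<^sup>+ x. e2ennreal (max 0 (- f x)) \<partial>M)"

end

(*
  The log-likelihood l_theta is ln q_theta, where q_theta is the density of the GEV law with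
  parameter theta, and G_gamma0 has density p = q_theta0.  The claim is therefore Gibbs'
  inequality: integrating ln (q / p) <= q / p - 1 against p gives int p ln q <= int p ln p, with
  equality only if q = p almost everywhere.  Both sides are meaningful because GEV densities with
  gamma > -1 are bounded and p ln p is integrable: the substitution t = (1 + gamma0 x) powr
  (-1 / gamma0) turns G_gamma0 into the standard exponential law, under which |ln t| + t is
  integrable.  Finally, equal densities give equal distribution functions, and
  x |-> F_gamma ((x - mu) / sigma) determines (gamma, mu, sigma).
*)

theory Submission
  imports Defs "HOL-Real_Asymp.Real_Asymp" "HOL-Probability.Distribution_Functions"
begin

section \<open>Distribution functions with a density off a finite set\<close>

definition primitive_off_finite :: "(real \<Rightarrow> real) \<Rightarrow> (real \<Rightarrow> real) \<Rightarrow> bool" where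
  "primitive_off_finite F f \<longleftrightarrow>
     (\<forall>x. isCont F x) \<and> (\<exists>S. finite S \<and> (\<forall>x. x \<notin> S \<longrightarrow> (F has_real_derivative f x) (at x)))"

lemma primitive_off_finite_has_integral:
  assumes "primitive_off_finite F f" and "a \<le> b"
  shows "(f has_integral F b - F a) {a..b}"
proof -
  obtain S where "finite S" and cont: "\<And>x. isCont F x"
    and deriv: "\<And>x. x \<notin> S \<Longrightarrow> (F has_real_derivative f x) (at x)"
    using assms(1) unfolding primitive_off_finite_def by blast
  show ?thesis
  proof (rule fundamental_theorem_of_calculus_interior_strong[OF \<open>finite S\<close> \<open>a \<le> b\<close>])
    show "continuous_on {a..b} F"
      using cont by (simp add: continuous_at_imp_continuous_on)
    show "(F has_vector_derivative f x) (at x)" if "x \<in> {a<..<b} - S" for x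
      using deriv that by (simp add: has_real_derivative_iff_has_vector_derivative[symmetric])
  qed
qed

lemma primitive_off_finite_mono:
  assumes "primitive_off_finite F f" and "\<And>x. 0 \<le> f x"
  shows "mono F"
proof
  fix a b :: real assume "a \<le> b"
  with has_integral_nonneg[OF primitive_off_finite_has_integral[OF assms(1)]] assms(2)
  show "F a \<le> F b" by fastforce
qed

lemma primitive_off_finite_affine:
  assumes "primitive_off_finite F f" and "s \<noteq> 0"
  shows "primitive_off_finite (\<lambda>x. F ((x - m) / s)) (\<lambda>x. f ((x - m) / s) / s)"
proof -
  obtain S where "finite S" and cont: "\<And>x. isCont F x"
    and deriv: "\<And>x. x \<notin> S \<Longrightarrow> (F has_real_derivative f x) (at x)"
    using assms(1) unfolding primitive_off_finite_def by blast
  have "((\<lambda>x. F ((x - m) / s)) has_real_derivative f ((x - m) / s) / s) (at x)"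
    if "x \<notin> (\<lambda>y. s * y + m) ` S" for x
  proof -
    have "(x - m) / s \<notin> S"
      using that assms(2) by (metis (no_types, lifting) image_eqI nonzero_mult_div_cancel_left diff_add_cancel times_divide_eq_right)
    moreover have "((\<lambda>x. (x - m) / s) has_real_derivative 1 / s) (at x)"
      using assms(2) by (auto intro!: derivative_eq_intros)
    ultimately show ?thesis
      using DERIV_chain2[OF deriv] assms(2) by fastforce
  qed
  moreover have "isCont (\<lambda>x. F ((x - m) / s)) x" for x
    using assms(2) by (intro isCont_o2[OF _ cont] continuous_intros)
  ultimately show ?thesis
    unfolding primitive_off_finite_def using \<open>finite S\<close> by blast
qed

lemma nn_integral_Ioc_primitive:
  assumes "primitive_off_finite F f" and "\<And>x. 0 \<le> f x" and "a \<le> b"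
  shows "(\<integral>\<^sup>+x. ennreal (f x) * indicator {a<..b} x \<partial>lborel) = ennreal (F b - F a)"
proof -
  have "(\<integral>\<^sup>+x. ennreal (f x) * indicator {a<..b} x \<partial>lborel)
      = (\<integral>\<^sup>+x. ennreal (indicator {a..b} x * f x) \<partial>lborel)"
    by (rule nn_integral_cong_AE, use AE_lborel_singleton[of a] in eventually_elim)
       (auto simp: indicator_def)
  also have "\<dots> = ennreal (F b - F a)"
    using primitive_off_finite_has_integral[OF assms(1,3)] assms(2)
    by (intro nn_integral_has_integral_lebesgue) auto
  finally show ?thesis .
qed

lemma interval_measure_primitive:
  assumes prim: "primitive_off_finite F f" and [measurable]: "f \<in> borel_measurable borel"
    and nonneg: "\<And>x. 0 \<le> f x"
  shows "interval_measure F = density lborel f"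
proof (rule measure_eqI_generator_eq[where \<Omega>=UNIV and E="range (\<lambda>(a, b). {a<..b::real})"
      and A="\<lambda>i. {- real (i::nat)<..real i}"])
  have mono: "\<And>x y. x \<le> y \<Longrightarrow> F x \<le> F y"
    using primitive_off_finite_mono[OF prim nonneg] by (simp add: mono_def)
  have right_cont: "\<And>a. continuous (at_right a) F"
    using prim by (simp add: primitive_off_finite_def continuous_at_imp_continuous_at_within)
  show "emeasure (interval_measure F) X = emeasure (density lborel f) X"
    if X_range: "X \<in> range (\<lambda>(a, b). {a<..b})" for X
  proof -
    obtain a b where X: "X = {a<..b}" using X_range by auto
    show ?thesis
    proof (cases "a \<le> b")
      case True
      then show ?thesis unfolding X
        by (simp add: emeasure_interval_measure_Ioc[OF True mono right_cont] emeasure_density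
            nn_integral_Ioc_primitive[OF prim nonneg True])
    qed (simp add: X)
  qed
  show "emeasure (interval_measure F) {- real i<..real i} \<noteq> \<infinity>" for i
    by (subst emeasure_interval_measure_Ioc[OF _ mono right_cont]) auto
qed (auto simp: borel_sigma_sets_Ioc Int_stable_def UN_Ioc_eq_UNIV)

lemma nn_integral_primitive:
  assumes prim: "primitive_off_finite F f" and [measurable]: "f \<in> borel_measurable borel"
    and nonneg: "\<And>x. 0 \<le> f x" and "(F \<longlongrightarrow> 0) at_bot" and "(F \<longlongrightarrow> c) at_top"
  shows "(\<integral>\<^sup>+x. ennreal (f x) \<partial>lborel) = ennreal c"
proof -
  have mono: "mono F" using primitive_off_finite_mono[OF prim nonneg] .
  have "0 \<le> F x" for x
    using assms(4) by (rule tendsto_upperbound)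
      (auto simp: eventually_at_bot_linorder intro!: exI[of _ x] monoD[OF mono])
  then have "0 \<le> c"
    using assms(5) by (intro tendsto_lowerbound) auto
  have "(\<integral>\<^sup>+x. ennreal (f x) \<partial>lborel) = emeasure (interval_measure F) UNIV"
    by (simp add: interval_measure_primitive[OF assms(1-3)] emeasure_density)
  also have "\<dots> = c"
    using mono prim assms(4,5) \<open>0 \<le> c\<close>
    by (intro interval_measure_UNIV)
       (auto simp: mono_def primitive_off_finite_def continuous_at_imp_continuous_at_within)
  finally show ?thesis .
qed

lemma primitive_eq_if_AE_eq:
  assumes F: "primitive_off_finite F f" "f \<in> borel_measurable borel" "\<And>x. 0 \<le> f x" "(F \<longlongrightarrow> 0) at_bot"
    and G: "primitive_off_finite G g" "g \<in> borel_measurable borel" "\<And>x. 0 \<le> g x" "(G \<longlongrightarrow> 0) at_bot"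
    and eq: "AE x in lborel. f x = g x"
  shows "F = G"
proof
  have cdf: "measure (interval_measure H) {..x} = H x"
    if "primitive_off_finite H h" "\<And>x. 0 \<le> h x" "(H \<longlongrightarrow> 0) at_bot" for H h x
    using primitive_off_finite_mono[OF that(1,2)] that
    by (intro measure_interval_measure_Iic)
       (auto simp: mono_def primitive_off_finite_def continuous_at_imp_continuous_at_within)
  have "interval_measure F = interval_measure G"
    using F G eq by (simp add: interval_measure_primitive density_cong)
  then show "F x = G x" for x
    using cdf[OF F(1,3,4)] cdf[OF G(1,3,4)] by metis
qed

section \<open>Gibbs' inequality\<close>

definition eln :: "real \<Rightarrow> ereal" where
  "eln t = (if 0 < t then ereal (ln t) else - \<infinity>)"

abbreviation pos_nn_integral :: "'a measure \<Rightarrow> ('a \<Rightarrow> ereal) \<Rightarrow> ennreal" where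
  "pos_nn_integral M f \<equiv> \<integral>\<^sup>+x. e2ennreal (max 0 (f x)) \<partial>M"

lemma eln_measurable [measurable]: "eln \<in> borel_measurable borel"
  unfolding eln_def by measurable

lemma e2ennreal_max_0_ereal: "e2ennreal (max 0 (ereal a)) = ennreal (max 0 a)"
  by (cases "0 \<le> a") (auto simp: max_def e2ennreal_neg)

lemma enn2ereal_diff_le_iff:
  assumes "a \<noteq> \<infinity>" "c \<noteq> \<infinity>" "d \<noteq> \<infinity>"
  shows "enn2ereal a - enn2ereal b \<le> enn2ereal c - enn2ereal d \<longleftrightarrow> a + d \<le> c + b"
    and "enn2ereal a - enn2ereal b = enn2ereal c - enn2ereal d \<longleftrightarrow> a + d = c + b"
proof -
  obtain a' where a: "a = ennreal a'" "0 \<le> a'" using assms(1) by (cases a rule: ennreal_cases) auto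
  obtain c' where c: "c = ennreal c'" "0 \<le> c'" using assms(2) by (cases c rule: ennreal_cases) auto
  obtain d' where d: "d = ennreal d'" "0 \<le> d'" using assms(3) by (cases d rule: ennreal_cases) auto
  have "(enn2ereal a - enn2ereal b \<le> enn2ereal c - enn2ereal d \<longleftrightarrow> a + d \<le> c + b) \<and>
        (enn2ereal a - enn2ereal b = enn2ereal c - enn2ereal d \<longleftrightarrow> a + d = c + b)"
  proof (cases b rule: ennreal_cases)
    case (real b')
    then show ?thesis using a c d
      by (simp add: ennreal_plus[symmetric] ennreal_le_iff ennreal_inj del: ennreal_plus) arith
  qed (simp add: a c d)
  then show "enn2ereal a - enn2ereal b \<le> enn2ereal c - enn2ereal d \<longleftrightarrow> a + d \<le> c + b"
    and "enn2ereal a - enn2ereal b = enn2ereal c - enn2ereal d \<longleftrightarrow> a + d = c + b"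
    by auto
qed

(* ln q - ln p <= q / p - 1, rearranged so that both sides are sums of nonnegative parts, which
   stays meaningful when some of them are infinite. *)
lemma gibbs_pointwise:
  assumes "0 < p" and "0 \<le> q"
  defines "lhs \<equiv> e2ennreal (max 0 (eln q)) + e2ennreal (max 0 (- eln p)) + 1"
    and "rhs \<equiv> e2ennreal (max 0 (eln p)) + e2ennreal (max 0 (- eln q)) + ennreal (q / p)"
  shows "lhs \<le> rhs" and "rhs \<le> lhs \<Longrightarrow> q = p"
proof -
  have "lhs \<le> rhs \<and> (rhs \<le> lhs \<longrightarrow> q = p)"
  proof (cases "q = 0")
    case True
    with assms have "lhs \<noteq> \<infinity>" "rhs = \<infinity>"
      unfolding lhs_def rhs_def
      by (simp_all add: eln_def e2ennreal_max_0_ereal e2ennreal_neg flip: ennreal_plus)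
    then show ?thesis by (simp add: top_unique)
  next
    case False
    with assms have q: "0 < q" by simp
    have lhs: "lhs = ennreal (max 0 (ln q) + max 0 (- ln p) + 1)"
      and rhs: "rhs = ennreal (max 0 (ln p) + max 0 (- ln q) + q / p)"
      using assms q unfolding lhs_def rhs_def
      by (simp_all add: eln_def e2ennreal_max_0_ereal ennreal_plus)
    have "ln q - ln p \<le> q / p - 1" and "q \<noteq> p \<Longrightarrow> ln q - ln p < q / p - 1"
      using ln_diff_le[OF q assms(1)] ln_diff_less[OF q assms(1)] assms
      by (simp_all add: diff_divide_distrib)
    moreover have "max 0 x - max 0 (- x) = x" for x :: real
      by (simp add: max_def)
    ultimately show ?thesis
      unfolding lhs rhs by (smt (verit) ennreal_le_iff ennreal_leI)
  qed
  then show "lhs \<le> rhs" and "rhs \<le> lhs \<Longrightarrow> q = p"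
    by auto
qed

lemma nn_integral_max_0_eln_finite:
  assumes "emeasure M (space M) \<noteq> \<infinity>" and "bdd_above (range r)"
  shows "pos_nn_integral M (\<lambda>x. eln (r x)) \<noteq> \<infinity>"
proof -
  obtain B where B: "\<And>x. r x \<le> B"
    using assms(2) by (auto simp: bdd_above_def)
  have "e2ennreal (max 0 (eln (r x))) \<le> ennreal (max 0 (ln B))" for x
    using B[of x] ln_mono[of "r x" B]
    by (auto simp: eln_def e2ennreal_max_0_ereal e2ennreal_neg intro!: ennreal_leI max.coboundedI2)
  then have "pos_nn_integral M (\<lambda>x. eln (r x)) \<le> (\<integral>\<^sup>+x. ennreal (max 0 (ln B)) \<partial>M)"
    by (rule nn_integral_mono)
  also have "\<dots> = ennreal (max 0 (ln B)) * emeasure M (space M)"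
    by simp
  also have "\<dots> < \<infinity>"
    using assms(1) by (simp add: ennreal_mult_less_top less_top)
  finally show ?thesis by simp
qed

lemma ext_integral_cong_AE:
  "AE x in M. f x = g x \<Longrightarrow> ext_integral M f = ext_integral M g"
  unfolding ext_integral_def by (metis (mono_tags, lifting) nn_integral_cong_AE AE_mp AE_I2)

lemma nn_integral_density_ratio:
  assumes [measurable]: "p \<in> borel_measurable N" "q \<in> borel_measurable N"
    and "\<And>x. 0 \<le> p x" and "\<And>x. 0 \<le> q x"
  shows "(\<integral>\<^sup>+x. ennreal (q x / p x) \<partial>density N p) = (\<integral>\<^sup>+x. ennreal (q x) * indicator {x. 0 < p x} x \<partial>N)"
proof -
  have "ennreal (p x) * ennreal (q x / p x) = ennreal (q x) * indicator {x. 0 < p x} x" for x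
    using assms(3,4)[of x] by (cases "p x = 0") (simp_all flip: ennreal_mult)
  then show ?thesis
    by (subst nn_integral_density) auto
qed

lemma AE_nn_integral_le_imp_AE_ge:
  assumes "AE x in M. f x \<le> g x" and "(\<integral>\<^sup>+x. g x \<partial>M) \<le> (\<integral>\<^sup>+x. f x \<partial>M)"
    and "(\<integral>\<^sup>+x. f x \<partial>M) \<noteq> \<infinity>"
    and "f \<in> borel_measurable M" "g \<in> borel_measurable M"
  shows "AE x in M. g x \<le> f x"
proof (rule ccontr)
  assume "\<not> (AE x in M. g x \<le> f x)"
  with assms have "(\<integral>\<^sup>+x. f x \<partial>M) < (\<integral>\<^sup>+x. g x \<partial>M)"
    by (intro nn_integral_less) auto
  with assms(2) show False by simp
qed

lemma AE_eq_if_AE_eq_on_support: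
  assumes [measurable]: "p \<in> borel_measurable N" "q \<in> borel_measurable N"
    and nonneg: "\<And>x. 0 \<le> p x" "\<And>x. 0 \<le> q x"
    and on_support: "AE x in N. 0 < p x \<longrightarrow> q x = p x"
    and mass_on_support: "(\<integral>\<^sup>+x. ennreal (q x) * indicator {x. 0 < p x} x \<partial>N) = 1"
    and mass: "(\<integral>\<^sup>+x. ennreal (q x) \<partial>N) \<le> 1"
  shows "AE x in N. q x = p x"
proof -
  define Z where "Z = (\<integral>\<^sup>+x. ennreal (q x) * indicator {x. \<not> 0 < p x} x \<partial>N)"
  have "(\<integral>\<^sup>+x. ennreal (q x) \<partial>N)
      = (\<integral>\<^sup>+x. ennreal (q x) * indicator {x. 0 < p x} x + ennreal (q x) * indicator {x. \<not> 0 < p x} x \<partial>N)"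
    by (intro nn_integral_cong) (simp split: split_indicator)
  also have "\<dots> = 1 + Z"
    unfolding Z_def mass_on_support[symmetric] by (rule nn_integral_add) measurable
  finally have "1 + Z \<le> 1 + 0"
    using mass by simp
  then have "Z = 0"
    by (subst (asm) ennreal_add_left_cancel_le) simp
  then have off_support: "AE x in N. ennreal (q x) * indicator {x. \<not> 0 < p x} x = 0"
    unfolding Z_def by (subst (asm) nn_integral_0_iff_AE) auto
  show ?thesis
    using on_support off_support
  proof eventually_elim
    case (elim x)
    with nonneg[of x] show ?case
      by (cases "0 < p x") auto
  qed
qed

lemma nn_integral_gibbs_pointwise:
  assumes [measurable]: "p \<in> borel_measurable N" "q \<in> borel_measurable N"
    and p_nonneg: "\<And>x. 0 \<le> p x" and q_nonneg: "\<And>x. 0 \<le> q x"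
    and p_prob: "(\<integral>\<^sup>+x. ennreal (p x) \<partial>N) = 1"
  defines "M \<equiv> density N p" and "R \<equiv> \<integral>\<^sup>+x. ennreal (q x) * indicator {x. 0 < p x} x \<partial>N"
  shows "pos_nn_integral M (\<lambda>x. eln (q x)) + pos_nn_integral M (\<lambda>x. - eln (p x)) + 1
           \<le> pos_nn_integral M (\<lambda>x. eln (p x)) + pos_nn_integral M (\<lambda>x. - eln (q x)) + R"
    and "pos_nn_integral M (\<lambda>x. eln (p x)) + pos_nn_integral M (\<lambda>x. - eln (q x)) + R
           \<le> pos_nn_integral M (\<lambda>x. eln (q x)) + pos_nn_integral M (\<lambda>x. - eln (p x)) + 1
         \<Longrightarrow> pos_nn_integral M (\<lambda>x. eln (q x)) + pos_nn_integral M (\<lambda>x. - eln (p x)) + 1 \<noteq> \<infinity>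
         \<Longrightarrow> AE x in N. 0 < p x \<longrightarrow> q x = p x"
proof -
  have [simp, measurable_cong]: "sets M = sets N" and [simp]: "space M = space N"
    by (simp_all add: M_def)
  have "emeasure M (space M) = 1"
    using p_prob by (simp add: M_def emeasure_density)
  have AE_pos: "AE x in M. 0 < p x"
    unfolding M_def by (subst AE_density) auto
  let ?lhs = "\<lambda>x. e2ennreal (max 0 (eln (q x))) + e2ennreal (max 0 (- eln (p x))) + 1"
  let ?rhs = "\<lambda>x. e2ennreal (max 0 (eln (p x))) + e2ennreal (max 0 (- eln (q x))) + ennreal (q x / p x)"
  have AE_le: "AE x in M. ?lhs x \<le> ?rhs x"
    using AE_pos by eventually_elim (simp add: gibbs_pointwise(1) q_nonneg)
  have int_lhs: "(\<integral>\<^sup>+x. ?lhs x \<partial>M)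
      = pos_nn_integral M (\<lambda>x. eln (q x)) + pos_nn_integral M (\<lambda>x. - eln (p x)) + 1"
    using \<open>emeasure M (space M) = 1\<close> by (simp add: nn_integral_add)
  have "(\<integral>\<^sup>+x. ennreal (q x / p x) \<partial>M) = R"
    unfolding R_def M_def using p_nonneg q_nonneg by (intro nn_integral_density_ratio) auto
  then have int_rhs: "(\<integral>\<^sup>+x. ?rhs x \<partial>M)
      = pos_nn_integral M (\<lambda>x. eln (p x)) + pos_nn_integral M (\<lambda>x. - eln (q x)) + R"
    by (simp add: nn_integral_add)
  show "pos_nn_integral M (\<lambda>x. eln (q x)) + pos_nn_integral M (\<lambda>x. - eln (p x)) + 1
      \<le> pos_nn_integral M (\<lambda>x. eln (p x)) + pos_nn_integral M (\<lambda>x. - eln (q x)) + R"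
    using nn_integral_mono_AE[OF AE_le] unfolding int_lhs int_rhs .
  assume "pos_nn_integral M (\<lambda>x. eln (p x)) + pos_nn_integral M (\<lambda>x. - eln (q x)) + R
      \<le> pos_nn_integral M (\<lambda>x. eln (q x)) + pos_nn_integral M (\<lambda>x. - eln (p x)) + 1"
    and "pos_nn_integral M (\<lambda>x. eln (q x)) + pos_nn_integral M (\<lambda>x. - eln (p x)) + 1 \<noteq> \<infinity>"
  then have "AE x in M. ?rhs x \<le> ?lhs x"
    unfolding int_lhs[symmetric] int_rhs[symmetric] by (intro AE_nn_integral_le_imp_AE_ge[OF AE_le]) auto
  with AE_pos have "AE x in M. q x = p x"
    by eventually_elim (rule gibbs_pointwise(2), simp_all add: q_nonneg)
  then show "AE x in N. 0 < p x \<longrightarrow> q x = p x"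
    unfolding M_def by (subst (asm) AE_density) auto
qed

lemma gibbs_nn_integral:
  assumes [measurable]: "p \<in> borel_measurable N" "q \<in> borel_measurable N"
    and p_nonneg: "\<And>x. 0 \<le> p x" and q_nonneg: "\<And>x. 0 \<le> q x"
    and p_prob: "(\<integral>\<^sup>+x. ennreal (p x) \<partial>N) = 1" and q_sub: "(\<integral>\<^sup>+x. ennreal (q x) \<partial>N) \<le> 1"
  defines "M \<equiv> density N p"
  shows "pos_nn_integral M (\<lambda>x. eln (q x)) + pos_nn_integral M (\<lambda>x. - eln (p x))
           \<le> pos_nn_integral M (\<lambda>x. eln (p x)) + pos_nn_integral M (\<lambda>x. - eln (q x))"
    and "pos_nn_integral M (\<lambda>x. eln (q x)) + pos_nn_integral M (\<lambda>x. - eln (p x))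
           = pos_nn_integral M (\<lambda>x. eln (p x)) + pos_nn_integral M (\<lambda>x. - eln (q x))
         \<Longrightarrow> pos_nn_integral M (\<lambda>x. eln (q x)) + pos_nn_integral M (\<lambda>x. - eln (p x)) \<noteq> \<infinity>
         \<Longrightarrow> AE x in N. q x = p x"
proof -
  define R where "R = (\<integral>\<^sup>+x. ennreal (q x) * indicator {x. 0 < p x} x \<partial>N)"
  have "R \<le> (\<integral>\<^sup>+x. ennreal (q x) \<partial>N)"
    unfolding R_def by (intro nn_integral_mono) (simp split: split_indicator)
  with q_sub have R_le: "R \<le> 1" by simp
  note integrated = nn_integral_gibbs_pointwise[OF assms(1-5), folded M_def R_def]
  let ?Pq = "pos_nn_integral M (\<lambda>x. eln (q x))" and ?Np = "pos_nn_integral M (\<lambda>x. - eln (p x))"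
  let ?Pp = "pos_nn_integral M (\<lambda>x. eln (p x))" and ?Nq = "pos_nn_integral M (\<lambda>x. - eln (q x))"
  from integrated(1) R_le have "?Pq + ?Np + 1 \<le> ?Pp + ?Nq + 1"
    by (meson add_left_mono order_trans)
  then show "?Pq + ?Np \<le> ?Pp + ?Nq"
    by simp
  assume eq: "?Pq + ?Np = ?Pp + ?Nq" and finite: "?Pq + ?Np \<noteq> \<infinity>"
  have "1 \<le> R"
    using integrated(1) finite unfolding eq by (simp only: ennreal_add_left_cancel_le) simp
  with R_le have "R = 1" by simp
  have "AE x in N. 0 < p x \<longrightarrow> q x = p x"
    using finite by (intro integrated(2)) (simp_all add: eq \<open>R = 1\<close>)
  with p_nonneg q_nonneg \<open>R = 1\<close> q_sub show "AE x in N. q x = p x"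
    unfolding R_def by (intro AE_eq_if_AE_eq_on_support) auto
qed

lemma gibbs_inequality:
  fixes N :: "real measure"
  assumes [measurable]: "p \<in> borel_measurable N" "q \<in> borel_measurable N"
    and nonneg: "\<And>x. 0 \<le> p x" "\<And>x. 0 \<le> q x"
    and bdd: "bdd_above (range p)" "bdd_above (range q)"
    and p_prob: "(\<integral>\<^sup>+x. ennreal (p x) \<partial>N) = 1" and q_sub: "(\<integral>\<^sup>+x. ennreal (q x) \<partial>N) \<le> 1"
    and entropy: "pos_nn_integral (density N p) (\<lambda>x. - eln (p x)) \<noteq> \<infinity>"
  shows "ext_integral (density N p) (\<lambda>x. eln (q x)) \<le> ext_integral (density N p) (\<lambda>x. eln (p x))"
    and "ext_integral (density N p) (\<lambda>x. eln (q x)) = ext_integral (density N p) (\<lambda>x. eln (p x))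
           \<longleftrightarrow> (AE x in N. q x = p x)"
proof -
  let ?M = "density N p"
  have "emeasure ?M (space ?M) \<noteq> \<infinity>"
    using p_prob by (simp add: emeasure_density)
  from nn_integral_max_0_eln_finite[OF this bdd(1)] nn_integral_max_0_eln_finite[OF this bdd(2)]
  have finite: "pos_nn_integral ?M (\<lambda>x. eln (p x)) \<noteq> \<infinity>" "pos_nn_integral ?M (\<lambda>x. eln (q x)) \<noteq> \<infinity>" .
  note gibbs = gibbs_nn_integral[OF assms(1-4) p_prob q_sub]
  show "ext_integral ?M (\<lambda>x. eln (q x)) \<le> ext_integral ?M (\<lambda>x. eln (p x))"
    unfolding ext_integral_def enn2ereal_diff_le_iff(1)[OF finite(2,1) entropy] by (rule gibbs(1))
  show "ext_integral ?M (\<lambda>x. eln (q x)) = ext_integral ?M (\<lambda>x. eln (p x)) \<longleftrightarrow> (AE x in N. q x = p x)"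
  proof
    assume "ext_integral ?M (\<lambda>x. eln (q x)) = ext_integral ?M (\<lambda>x. eln (p x))"
    with finite entropy show "AE x in N. q x = p x"
      unfolding ext_integral_def enn2ereal_diff_le_iff(2)[OF finite(2,1) entropy] by (intro gibbs(2)) auto
  next
    assume "AE x in N. q x = p x"
    then have "AE x in ?M. eln (q x) = eln (p x)"
      by (subst AE_density) (auto elim: AE_mp)
    then show "ext_integral ?M (\<lambda>x. eln (q x)) = ext_integral ?M (\<lambda>x. eln (p x))"
      by (rule ext_integral_cong_AE)
  qed
qed

section \<open>The GEV transformation\<close>

(* On the support 1 + g y > 0 one has gev_t g y = (1 + g y) powr (-1 / g) and
   gev_cdf g y = exp (- gev_t g y). *)
definition gev_h :: "real \<Rightarrow> real \<Rightarrow> real" where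
  "gev_h g y = (if g = 0 then y else ln (1 + g * y) / g)"

definition gev_t :: "real \<Rightarrow> real \<Rightarrow> real" where
  "gev_t g y = exp (- gev_h g y)"

lemma gev_t_pos: "0 < gev_t g y"
  by (simp add: gev_t_def)

lemma exp_gev_h: "0 < 1 + g * y \<Longrightarrow> exp (g * gev_h g y) = 1 + g * y"
  by (simp add: gev_h_def)

lemma gev_t_div:
  assumes "0 < 1 + g * y"
  shows "gev_t g y / (1 + g * y) = exp (- (1 + g) * gev_h g y)"
proof -
  have "gev_t g y / (1 + g * y) = exp (- gev_h g y) / exp (g * gev_h g y)"
    using assms by (simp add: gev_t_def exp_gev_h)
  also have "\<dots> = exp (- (1 + g) * gev_h g y)"
    by (simp add: algebra_simps flip: exp_diff)
  finally show ?thesis .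
qed

lemma gev_h_has_derivative:
  assumes "0 < 1 + g * y"
  shows "(gev_h g has_real_derivative 1 / (1 + g * y)) (at y)"
proof (cases "g = 0")
  case False
  then have "0 < g * g * (1 + g * y)"
    using assms by (auto simp: zero_less_mult_iff linorder_neq_iff)
  then have "((\<lambda>y. ln (1 + g * y) / g) has_real_derivative 1 / (1 + g * y)) (at y)"
    using assms False by (auto intro!: derivative_eq_intros simp: field_simps)
  with False show ?thesis
    by (simp add: gev_h_def[abs_def])
qed (simp add: gev_h_def[abs_def])

lemma gev_t_has_derivative:
  assumes "0 < 1 + g * y"
  shows "(gev_t g has_real_derivative - gev_t g y / (1 + g * y)) (at y)"
  using DERIV_chain2[OF DERIV_exp DERIV_minus[OF gev_h_has_derivative[OF assms]]]
  by (simp add: gev_t_def[abs_def])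

lemma gev_support_boundary:
  fixes g x y :: real
  assumes "1 + g * x = 0"
  shows "0 < g \<Longrightarrow> 0 < 1 + g * y \<longleftrightarrow> x < y" and "g < 0 \<Longrightarrow> 0 < 1 + g * y \<longleftrightarrow> y < x"
proof -
  have "1 + g * y = g * (y - x)"
    using assms by (simp add: algebra_simps)
  then show "0 < g \<Longrightarrow> 0 < 1 + g * y \<longleftrightarrow> x < y" and "g < 0 \<Longrightarrow> 0 < 1 + g * y \<longleftrightarrow> y < x"
    by (simp_all add: zero_less_mult_iff)
qed

lemma gev_t_at_right_boundary:
  assumes "0 < g" and "1 + g * x = 0"
  shows "filterlim (gev_t g) at_top (at_right x)"
proof -
  have "\<forall>\<^sub>F y in at_right x. 0 < 1 + g * y"
    using eventually_at_right_less[of x]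
    by eventually_elim (simp add: gev_support_boundary(1)[OF assms(2,1)])
  then have "filterlim (\<lambda>y. 1 + g * y) (at_right 0) (at_right x)"
    using assms(2) by (intro tendsto_imp_filterlim_at_right) (auto intro!: tendsto_eq_intros)
  moreover have "filterlim (\<lambda>z. exp (- (ln z / g))) at_top (at_right 0)"
    using assms(1) by real_asymp
  ultimately have "filterlim (\<lambda>y. exp (- (ln (1 + g * y) / g))) at_top (at_right x)"
    by (rule filterlim_compose[rotated])
  with assms(1) show ?thesis
    by (simp add: gev_t_def[abs_def] gev_h_def)
qed

lemma gev_t_at_left_boundary:
  assumes "g < 0" and "1 + g * x = 0"
  shows "filterlim (gev_t g) (at_right 0) (at_left x)"
proof -
  have "\<forall>\<^sub>F y in at_left x. y < x"
    by (simp add: eventually_at_filter)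
  then have "\<forall>\<^sub>F y in at_left x. 0 < 1 + g * y"
    by eventually_elim (simp add: gev_support_boundary(2)[OF assms(2,1)])
  then have "filterlim (\<lambda>y. 1 + g * y) (at_right 0) (at_left x)"
    using assms(2) by (intro tendsto_imp_filterlim_at_right) (auto intro!: tendsto_eq_intros)
  moreover have "filterlim (\<lambda>z. exp (- (ln z / g))) (at_right 0) (at_right 0)"
    using assms(1) by real_asymp
  ultimately have "filterlim (\<lambda>y. exp (- (ln (1 + g * y) / g))) (at_right 0) (at_left x)"
    by (rule filterlim_compose[rotated])
  with assms(1) show ?thesis
    by (simp add: gev_t_def[abs_def] gev_h_def)
qed

lemma gev_t_at_top:
  assumes "0 \<le> g"
  shows "filterlim (gev_t g) (at_right 0) at_top"
proof (cases "g = 0")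
  case True
  have "filterlim (\<lambda>y. exp (- y)) (at_right (0::real)) at_top"
    by real_asymp
  with True show ?thesis
    by (simp add: gev_t_def[abs_def] gev_h_def)
next
  case False
  with assms have "filterlim (\<lambda>y. exp (- (ln (1 + g * y) / g))) (at_right 0) at_top"
    by real_asymp
  then show ?thesis
    using False by (simp add: gev_t_def[abs_def] gev_h_def)
qed

lemma gev_t_at_bot:
  assumes "g \<le> 0"
  shows "filterlim (gev_t g) at_top at_bot"
proof (cases "g = 0")
  case True
  have "filterlim (\<lambda>y. exp (- y)) at_top (at_bot :: real filter)"
    by real_asymp
  with True show ?thesis
    by (simp add: gev_t_def[abs_def] gev_h_def)
next
  case False
  with assms have "filterlim (\<lambda>y. exp (- (ln (1 + g * y) / g))) at_top at_bot"
    by real_asymp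
  then show ?thesis
    using False by (simp add: gev_t_def[abs_def] gev_h_def)
qed

(* phi o gev_t, continued outside the support by the limit of phi that gev_t approaches there:
   infinity below the support (g > 0), 0 above it (g < 0). *)
definition gev_lift :: "(real \<Rightarrow> real) \<Rightarrow> real \<Rightarrow> real \<Rightarrow> real \<Rightarrow> real \<Rightarrow> real" where
  "gev_lift \<phi> a b g y = (if 0 < 1 + g * y then \<phi> (gev_t g y) else if 0 < g then b else a)"

context
  fixes \<phi> \<phi>' :: "real \<Rightarrow> real" and a b :: real
  assumes deriv: "\<And>t. 0 < t \<Longrightarrow> (\<phi> has_real_derivative \<phi>' t) (at t)"
    and lim_0: "(\<phi> \<longlongrightarrow> a) (at_right 0)" and lim_infinity: "(\<phi> \<longlongrightarrow> b) at_top"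
begin

lemma gev_lift_has_derivative:
  assumes "1 + g * x \<noteq> 0"
  shows "(gev_lift \<phi> a b g has_real_derivative
           (if 0 < 1 + g * x then - \<phi>' (gev_t g x) * exp (- (1 + g) * gev_h g x) else 0)) (at x)"
proof (cases "0 < 1 + g * x")
  case True
  have "((\<lambda>y. \<phi> (gev_t g y)) has_real_derivative \<phi>' (gev_t g x) * (- gev_t g x / (1 + g * x))) (at x)"
    by (rule DERIV_chain2[OF deriv[OF gev_t_pos] gev_t_has_derivative[OF True]])
  then have "((\<lambda>y. \<phi> (gev_t g y)) has_real_derivative - \<phi>' (gev_t g x) * exp (- (1 + g) * gev_h g x)) (at x)"
    using gev_t_div[OF True] by simp
  moreover have "open {y. 0 < 1 + g * y}"
    by (intro open_Collect_less continuous_intros)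
  ultimately have "(gev_lift \<phi> a b g has_real_derivative - \<phi>' (gev_t g x) * exp (- (1 + g) * gev_h g x)) (at x)"
    by (rule has_field_derivative_transform_within_open) (use True in \<open>auto simp: gev_lift_def\<close>)
  with True show ?thesis by simp
next
  case False
  with assms have "1 + g * x < 0" by simp
  have "((\<lambda>y. if 0 < g then b else a) has_real_derivative 0) (at x)"
    by simp
  moreover have "open {y. 1 + g * y < 0}"
    by (intro open_Collect_less continuous_intros)
  ultimately have "(gev_lift \<phi> a b g has_real_derivative 0) (at x)"
    by (rule has_field_derivative_transform_within_open) (use \<open>1 + g * x < 0\<close> in \<open>auto simp: gev_lift_def\<close>)
  with False show ?thesis by simp
qed

lemma isCont_gev_lift_lower_boundary:
  assumes "0 < g" and "1 + g * x = 0"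
  shows "isCont (gev_lift \<phi> a b g) x"
proof -
  have "((\<lambda>y. \<phi> (gev_t g y)) \<longlongrightarrow> b) (at_right x)"
    using filterlim_compose[OF lim_infinity gev_t_at_right_boundary[OF assms]] .
  moreover have "\<forall>\<^sub>F y in at_right x. \<phi> (gev_t g y) = gev_lift \<phi> a b g y"
    using eventually_at_right_less[of x]
    by eventually_elim (simp add: gev_lift_def gev_support_boundary(1)[OF assms(2,1)])
  ultimately have right: "(gev_lift \<phi> a b g \<longlongrightarrow> b) (at_right x)"
    by (rule Lim_transform_eventually)
  have "\<forall>\<^sub>F y in at_left x. y < x"
    by (simp add: eventually_at_filter)
  then have "\<forall>\<^sub>F y in at_left x. b = gev_lift \<phi> a b g y"
    by eventually_elim (use assms in \<open>simp add: gev_lift_def gev_support_boundary(1)[OF assms(2,1)]\<close>)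
  then have left: "(gev_lift \<phi> a b g \<longlongrightarrow> b) (at_left x)"
    by (rule Lim_transform_eventually[OF tendsto_const])
  from filterlim_split_at[OF left right] assms show ?thesis
    by (simp add: isCont_def gev_lift_def)
qed

lemma isCont_gev_lift_upper_boundary:
  assumes "g < 0" and "1 + g * x = 0"
  shows "isCont (gev_lift \<phi> a b g) x"
proof -
  have "((\<lambda>y. \<phi> (gev_t g y)) \<longlongrightarrow> a) (at_left x)"
    using filterlim_compose[OF lim_0 gev_t_at_left_boundary[OF assms]] .
  moreover have "\<forall>\<^sub>F y in at_left x. y < x"
    by (simp add: eventually_at_filter)
  then have "\<forall>\<^sub>F y in at_left x. \<phi> (gev_t g y) = gev_lift \<phi> a b g y"
    by eventually_elim (simp add: gev_lift_def gev_support_boundary(2)[OF assms(2,1)])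
  ultimately have left: "(gev_lift \<phi> a b g \<longlongrightarrow> a) (at_left x)"
    by (rule Lim_transform_eventually)
  have "\<forall>\<^sub>F y in at_right x. a = gev_lift \<phi> a b g y"
    using eventually_at_right_less[of x]
    by eventually_elim (use assms in \<open>simp add: gev_lift_def gev_support_boundary(2)[OF assms(2,1)]\<close>)
  then have right: "(gev_lift \<phi> a b g \<longlongrightarrow> a) (at_right x)"
    by (rule Lim_transform_eventually[OF tendsto_const])
  from filterlim_split_at[OF left right] assms show ?thesis
    by (simp add: isCont_def gev_lift_def)
qed

lemma isCont_gev_lift: "isCont (gev_lift \<phi> a b g) x"
proof -
  consider "1 + g * x \<noteq> 0" | "0 < g" "1 + g * x = 0" | "g < 0" "1 + g * x = 0"
    by (cases g "0 :: real" rule: linorder_cases) auto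
  then show ?thesis
    using gev_lift_has_derivative[THEN DERIV_isCont] isCont_gev_lift_lower_boundary
      isCont_gev_lift_upper_boundary
    by cases blast+
qed

lemma primitive_off_finite_gev_lift:
  "primitive_off_finite (gev_lift \<phi> a b g)
     (\<lambda>x. if 0 < 1 + g * x then - \<phi>' (gev_t g x) * exp (- (1 + g) * gev_h g x) else 0)"
  unfolding primitive_off_finite_def
proof (intro conjI allI exI[of _ "{x. 1 + g * x = 0}"] impI isCont_gev_lift)
  show "finite {x. 1 + g * x = 0}"
    by (rule finite_subset[of _ "{- 1 / g}"]) (cases "g = 0", auto simp: field_simps)
qed (simp add: gev_lift_has_derivative)

lemma gev_lift_at_bot: "(gev_lift \<phi> a b g \<longlongrightarrow> b) at_bot"
proof (cases "0 < g")
  case True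
  have "\<forall>\<^sub>F y in at_bot. b = gev_lift \<phi> a b g y"
    unfolding eventually_at_bot_linorder
  proof (intro exI allI impI)
    fix y assume "y \<le> - 1 / g"
    with True have "g * y \<le> -1"
      by (simp add: field_simps)
    with True show "b = gev_lift \<phi> a b g y"
      by (simp add: gev_lift_def)
  qed
  then show ?thesis
    by (rule Lim_transform_eventually[OF tendsto_const])
next
  case False
  have "((\<lambda>y. \<phi> (gev_t g y)) \<longlongrightarrow> b) at_bot"
    using filterlim_compose[OF lim_infinity gev_t_at_bot] False by simp
  moreover have "\<forall>\<^sub>F y in at_bot. \<phi> (gev_t g y) = gev_lift \<phi> a b g y"
    unfolding eventually_at_bot_linorder
  proof (intro exI allI impI)
    fix y :: real assume "y \<le> 0"
    with False have "0 \<le> g * y"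
      by (simp add: mult_nonpos_nonpos)
    then show "\<phi> (gev_t g y) = gev_lift \<phi> a b g y"
      by (simp add: gev_lift_def)
  qed
  ultimately show ?thesis
    by (rule Lim_transform_eventually)
qed

lemma gev_lift_at_top: "(gev_lift \<phi> a b g \<longlongrightarrow> a) at_top"
proof (cases "g < 0")
  case True
  have "\<forall>\<^sub>F y in at_top. a = gev_lift \<phi> a b g y"
    unfolding eventually_at_top_linorder
  proof (intro exI allI impI)
    fix y assume "- 1 / g \<le> y"
    with True have "g * y \<le> -1"
      by (simp add: field_simps)
    with True show "a = gev_lift \<phi> a b g y"
      by (simp add: gev_lift_def)
  qed
  then show ?thesis
    by (rule Lim_transform_eventually[OF tendsto_const])
next
  case False
  have "((\<lambda>y. \<phi> (gev_t g y)) \<longlongrightarrow> a) at_top"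
    using filterlim_compose[OF lim_0 gev_t_at_top] False by simp
  moreover have "\<forall>\<^sub>F y in at_top. \<phi> (gev_t g y) = gev_lift \<phi> a b g y"
    unfolding eventually_at_top_linorder
  proof (intro exI allI impI)
    fix y :: real assume "0 \<le> y"
    with False have "0 \<le> g * y"
      by simp
    then show "\<phi> (gev_t g y) = gev_lift \<phi> a b g y"
      by (simp add: gev_lift_def)
  qed
  ultimately show ?thesis
    by (rule Lim_transform_eventually)
qed

end

section \<open>GEV distribution functions and densities\<close>

definition gev_density :: "real \<Rightarrow> real \<Rightarrow> real" where
  "gev_density g y = (if 0 < 1 + g * y then exp (- (1 + g) * gev_h g y - gev_t g y) else 0)"

definition gev_density_param :: "real \<times> real \<times> real \<Rightarrow> real \<Rightarrow> real" where
  "gev_density_param \<theta> x = (case \<theta> of (g, m, s) \<Rightarrow> gev_density g ((x - m) / s) / s)"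

lemma gev_density_nonneg: "0 \<le> gev_density g y"
  by (simp add: gev_density_def)

lemma gev_density_measurable [measurable]: "gev_density g \<in> borel_measurable borel"
  unfolding gev_density_def[abs_def] gev_t_def gev_h_def by measurable

lemma gev_cdf_eq_gev_lift: "gev_cdf g = gev_lift (\<lambda>t. exp (- t)) 1 0 g"
  by (auto simp: fun_eq_iff gev_cdf_def gev_lift_def gev_t_def gev_h_def powr_def)

lemma
  shows primitive_off_finite_gev_cdf: "primitive_off_finite (gev_cdf g) (gev_density g)"
    and gev_cdf_at_bot: "(gev_cdf g \<longlongrightarrow> 0) at_bot"
    and gev_cdf_at_top: "(gev_cdf g \<longlongrightarrow> 1) at_top"
proof -
  have deriv: "((\<lambda>t. exp (- t)) has_real_derivative - exp (- t)) (at t)" for t :: real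
    by (auto intro!: derivative_eq_intros)
  have lims: "((\<lambda>t. exp (- t)) \<longlongrightarrow> 1) (at_right (0::real))" "((\<lambda>t. exp (- t)) \<longlongrightarrow> 0) (at_top :: real filter)"
    by real_asymp+
  have "(\<lambda>x. if 0 < 1 + g * x then - (- exp (- gev_t g x)) * exp (- (1 + g) * gev_h g x) else 0)
      = gev_density g"
    by (simp add: fun_eq_iff gev_density_def mult_exp_exp algebra_simps)
  then show "primitive_off_finite (gev_cdf g) (gev_density g)"
    unfolding gev_cdf_eq_gev_lift using primitive_off_finite_gev_lift[OF deriv lims, of g] by simp
  show "(gev_cdf g \<longlongrightarrow> 0) at_bot" and "(gev_cdf g \<longlongrightarrow> 1) at_top"
    unfolding gev_cdf_eq_gev_lift by (rule gev_lift_at_bot[OF deriv lims] gev_lift_at_top[OF deriv lims])+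
qed

lemma GEV_eq_density: "GEV g = density lborel (gev_density g)"
  unfolding GEV_def
  by (rule interval_measure_primitive[OF primitive_off_finite_gev_cdf]) (simp_all add: gev_density_nonneg)

lemma
  assumes "0 < s"
  shows primitive_off_finite_gev_cdf_param:
      "primitive_off_finite (\<lambda>x. gev_cdf g ((x - m) / s)) (gev_density_param (g, m, s))"
    and gev_cdf_param_at_bot: "((\<lambda>x. gev_cdf g ((x - m) / s)) \<longlongrightarrow> 0) at_bot"
    and gev_cdf_param_at_top: "((\<lambda>x. gev_cdf g ((x - m) / s)) \<longlongrightarrow> 1) at_top"
proof -
  show "primitive_off_finite (\<lambda>x. gev_cdf g ((x - m) / s)) (gev_density_param (g, m, s))"
    using primitive_off_finite_affine[OF primitive_off_finite_gev_cdf[of g], of s m] assms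
    by (simp add: gev_density_param_def[abs_def])
  have "filterlim (\<lambda>x. (x - m) / s) at_bot at_bot" and "filterlim (\<lambda>x. (x - m) / s) at_top at_top"
    using assms by real_asymp+
  then show "((\<lambda>x. gev_cdf g ((x - m) / s)) \<longlongrightarrow> 0) at_bot"
    and "((\<lambda>x. gev_cdf g ((x - m) / s)) \<longlongrightarrow> 1) at_top"
    by (auto intro: filterlim_compose[OF gev_cdf_at_bot] filterlim_compose[OF gev_cdf_at_top])
qed

lemma gev_density_param_nonneg: "0 < s \<Longrightarrow> 0 \<le> gev_density_param (g, m, s) x"
  by (simp add: gev_density_param_def gev_density_nonneg)

lemma gev_density_param_measurable [measurable]: "gev_density_param \<theta> \<in> borel_measurable borel"
  unfolding gev_density_param_def[abs_def] by (cases \<theta>) measurable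

lemma gev_density_param_0_1 [simp]: "gev_density_param (g, 0, 1) = gev_density g"
  by (simp add: fun_eq_iff gev_density_param_def)

lemma nn_integral_gev_density_param:
  "0 < s \<Longrightarrow> (\<integral>\<^sup>+x. ennreal (gev_density_param (g, m, s) x) \<partial>lborel) = 1"
  using nn_integral_primitive[OF primitive_off_finite_gev_cdf_param _ gev_density_param_nonneg
      gev_cdf_param_at_bot gev_cdf_param_at_top]
  by simp

lemma gev_loglik_eq_eln: "gev_loglik g y = eln (gev_density g y)"
  by (simp add: gev_loglik_def gev_density_def eln_def gev_t_def gev_h_def powr_def field_simps)

lemma gev_loglik_param_eq_eln:
  "0 < s \<Longrightarrow> gev_loglik_param (g, m, s) = (\<lambda>x. eln (gev_density_param (g, m, s) x))"
  by (auto simp: fun_eq_iff gev_loglik_param_def gev_density_param_def gev_loglik_eq_eln eln_def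
      ln_div gev_density_nonneg less_le)

lemma mult_minus_exp_le:
  fixes c u :: real
  assumes "0 < c"
  shows "c * u - exp u \<le> c * ln c - c"
proof -
  have "c * (1 + (u - ln c)) \<le> c * exp (u - ln c)"
    using assms exp_ge_add_one_self[of "u - ln c"] by (intro mult_left_mono) auto
  also have "\<dots> = exp u"
    using assms by (simp add: exp_diff)
  finally show ?thesis
    by (simp add: algebra_simps)
qed

lemma gev_density_param_bdd_above:
  assumes "-1 < g" and "0 < s"
  shows "bdd_above (range (gev_density_param (g, m, s)))"
proof (rule bdd_aboveI)
  fix d assume "d \<in> range (gev_density_param (g, m, s))"
  then obtain x where d: "d = gev_density_param (g, m, s) x" by auto
  have "gev_density g y \<le> exp ((1 + g) * ln (1 + g) - (1 + g))" for y
    using mult_minus_exp_le[of "1 + g" "- gev_h g y"] assms(1)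
    by (simp add: gev_density_def gev_t_def algebra_simps)
  with assms(2) show "d \<le> exp ((1 + g) * ln (1 + g) - (1 + g)) / s"
    unfolding d gev_density_param_def by (simp add: divide_right_mono)
qed

section \<open>Finite entropy and identifiability\<close>

(* After the substitution t = gev_t g x the GEV law is the standard exponential law, and
   - ln (gev_density g x) <= (2 + g) (|ln t| + t).  The majorant below of (|ln t| + t) exp (- t)
   has a bounded explicit primitive, which replaces that change of variables. *)
definition entropy_majorant :: "real \<Rightarrow> real" where
  "entropy_majorant t = (2 / sqrt t + 4 * t + 2 - 4 * sqrt t) * exp (- t)"

definition entropy_majorant_primitive :: "real \<Rightarrow> real" where
  "entropy_majorant_primitive t = (6 + 4 * t - 4 * sqrt t) * exp (- t)"

lemma entropy_majorant_primitive_has_derivative: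
  "0 < t \<Longrightarrow> (entropy_majorant_primitive has_real_derivative - entropy_majorant t) (at t)"
  unfolding entropy_majorant_primitive_def[abs_def] entropy_majorant_def
  by (auto intro!: derivative_eq_intros simp: field_simps real_sqrt_mult[symmetric])

lemma abs_ln_le:
  assumes "0 < t"
  shows "\<bar>ln t\<bar> \<le> t + 2 / sqrt t"
proof (cases "1 \<le> t")
  case True
  have "ln t \<le> t - 1"
    using assms by (rule ln_le_minus_one)
  moreover have "0 \<le> ln t" and "0 \<le> 2 / sqrt t"
    using True by simp_all
  ultimately show ?thesis
    by linarith
next
  case False
  have "- ln t = 2 * ln (1 / sqrt t)"
    using assms by (simp add: ln_div ln_sqrt)
  also have "\<dots> \<le> 2 * (1 / sqrt t - 1)"
    using assms ln_le_minus_one[of "1 / sqrt t"] by simp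
  finally show ?thesis
    using assms False by simp
qed

lemma entropy_majorant_ge:
  assumes "0 < t"
  shows "(\<bar>ln t\<bar> + t) * exp (- t) \<le> entropy_majorant t"
proof -
  have "sqrt t \<le> (t + 1) / 2"
    using arith_geo_mean_sqrt[of t 1] assms by simp
  with abs_ln_le[OF assms] have "\<bar>ln t\<bar> + t \<le> 2 / sqrt t + 4 * t + 2 - 4 * sqrt t"
    by argo
  then show ?thesis
    unfolding entropy_majorant_def by (simp add: mult_right_mono)
qed

lemma nn_integral_gev_entropy_majorant:
  "(\<integral>\<^sup>+x. ennreal (if 0 < 1 + g * x then entropy_majorant (gev_t g x) * exp (- (1 + g) * gev_h g x) else 0)
     \<partial>lborel) = 6"
proof -
  define m where "m x = (if 0 < 1 + g * x then entropy_majorant (gev_t g x) * exp (- (1 + g) * gev_h g x) else 0)" for x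
  have lims: "(entropy_majorant_primitive \<longlongrightarrow> 6) (at_right 0)" "(entropy_majorant_primitive \<longlongrightarrow> 0) at_top"
    unfolding entropy_majorant_primitive_def by real_asymp+
  note deriv = entropy_majorant_primitive_has_derivative
  have "(\<lambda>x. if 0 < 1 + g * x then - (- entropy_majorant (gev_t g x)) * exp (- (1 + g) * gev_h g x) else 0) = m"
    by (simp add: fun_eq_iff m_def)
  then have "primitive_off_finite (gev_lift entropy_majorant_primitive 6 0 g) m"
    using primitive_off_finite_gev_lift[OF deriv lims, of g] by simp
  moreover have "m \<in> borel_measurable borel"
    unfolding m_def[abs_def] entropy_majorant_def gev_t_def gev_h_def by measurable
  moreover have "0 \<le> m x" for x
    using entropy_majorant_ge[OF gev_t_pos, of g x]
    by (simp add: m_def) (smt (verit) abs_ge_zero exp_gt_zero mult_nonneg_nonneg gev_t_pos)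
  ultimately have "(\<integral>\<^sup>+x. ennreal (m x) \<partial>lborel) = ennreal 6"
    using gev_lift_at_bot[OF deriv lims] gev_lift_at_top[OF deriv lims] by (rule nn_integral_primitive)
  then show ?thesis
    by (simp add: m_def)
qed

lemma gev_density_neg_ln_le:
  assumes "-1 < g" and "0 < 1 + g * x"
  shows "gev_density g x * max 0 (- ln (gev_density g x))
           \<le> (2 + g) * (entropy_majorant (gev_t g x) * exp (- (1 + g) * gev_h g x))"
proof -
  define t where "t = gev_t g x"
  define e where "e = exp (- (1 + g) * gev_h g x)"
  have t: "0 < t" and h: "gev_h g x = - ln t"
    by (simp_all add: t_def gev_t_pos gev_t_def)
  have density: "gev_density g x = e * exp (- t)"
    using assms(2) by (simp add: gev_density_def e_def t_def mult_exp_exp)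
  have "(1 + g) * - ln t \<le> (1 + g) * \<bar>ln t\<bar>"
    using assms(1) by (intro mult_left_mono) auto
  also have "\<dots> \<le> (2 + g) * \<bar>ln t\<bar>"
    by (intro mult_right_mono) auto
  moreover have "t \<le> (2 + g) * t"
    using mult_right_mono[of 1 "2 + g" t] assms(1) t by simp
  moreover have "- ln (gev_density g x) = (1 + g) * - ln t + t"
    using assms(2) by (simp add: gev_density_def h algebra_simps flip: t_def)
  ultimately have "- ln (gev_density g x) \<le> (2 + g) * (\<bar>ln t\<bar> + t)"
    by (simp add: distrib_left)
  then have "max 0 (- ln (gev_density g x)) \<le> (2 + g) * (\<bar>ln t\<bar> + t)"
    using assms(1) t by simp
  then have "gev_density g x * max 0 (- ln (gev_density g x)) \<le> e * exp (- t) * ((2 + g) * (\<bar>ln t\<bar> + t))"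
    unfolding density by (intro mult_left_mono) (simp_all add: e_def)
  also have "\<dots> = (2 + g) * e * ((\<bar>ln t\<bar> + t) * exp (- t))"
    by simp
  also have "\<dots> \<le> (2 + g) * e * entropy_majorant t"
    using assms(1) entropy_majorant_ge[OF t] by (intro mult_left_mono) (simp_all add: e_def)
  finally show ?thesis
    by (simp add: t_def e_def ac_simps)
qed

lemma gev_entropy_finite:
  assumes "-1 < g"
  shows "pos_nn_integral (GEV g) (\<lambda>x. - eln (gev_density g x)) \<noteq> \<infinity>"
proof -
  define m where "m x = (if 0 < 1 + g * x then entropy_majorant (gev_t g x) * exp (- (1 + g) * gev_h g x) else 0)" for x
  have [measurable]: "m \<in> borel_measurable borel"
    unfolding m_def[abs_def] entropy_majorant_def gev_t_def gev_h_def by measurable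
  have pointwise: "ennreal (gev_density g x) * e2ennreal (max 0 (- eln (gev_density g x)))
      \<le> ennreal (2 + g) * ennreal (m x)" for x
  proof (cases "0 < 1 + g * x")
    case True
    then have "0 < gev_density g x"
      by (simp add: gev_density_def)
    then have "ennreal (gev_density g x) * e2ennreal (max 0 (- eln (gev_density g x)))
        = ennreal (gev_density g x * max 0 (- ln (gev_density g x)))"
      by (simp add: eln_def e2ennreal_max_0_ereal ennreal_mult)
    also have "\<dots> \<le> ennreal ((2 + g) * m x)"
      using gev_density_neg_ln_le[OF assms True] True by (simp add: m_def ennreal_leI)
    also have "\<dots> = ennreal (2 + g) * ennreal (m x)"
      using assms by (simp add: ennreal_mult')
    finally show ?thesis .
  qed (simp add: gev_density_def)
  have "pos_nn_integral (GEV g) (\<lambda>x. - eln (gev_density g x))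
      = (\<integral>\<^sup>+x. ennreal (gev_density g x) * e2ennreal (max 0 (- eln (gev_density g x))) \<partial>lborel)"
    unfolding GEV_eq_density by (rule nn_integral_density) measurable
  also have "\<dots> \<le> (\<integral>\<^sup>+x. ennreal (2 + g) * ennreal (m x) \<partial>lborel)"
    by (rule nn_integral_mono) (rule pointwise)
  also have "\<dots> = ennreal (2 + g) * (\<integral>\<^sup>+x. ennreal (m x) \<partial>lborel)"
    by (rule nn_integral_cmult) measurable
  also have "\<dots> = ennreal (2 + g) * 6"
    using nn_integral_gev_entropy_majorant[of g] by (simp add: m_def)
  also have "\<dots> < \<infinity>"
    by (simp add: ennreal_mult_less_top)
  finally show ?thesis
    by simp
qed

lemma gev_cdf_eq_exp: "0 < 1 + g * y \<Longrightarrow> gev_cdf g y = exp (- gev_t g y)"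
  by (simp add: gev_cdf_eq_gev_lift gev_lift_def)

lemma gev_cdf_affine_eq_imp:
  assumes s: "0 < s" and eq: "\<And>x. gev_cdf g ((x - m) / s) = gev_cdf g0 x"
  shows "g = g0 \<and> m = 0 \<and> s = 1"
proof -
  define U where "U = {x. 0 < 1 + g0 * x}"
  have "open U"
    unfolding U_def by (intro open_Collect_less continuous_intros)
  have support: "0 < 1 + g * ((x - m) / s)" and h_eq: "gev_h g ((x - m) / s) = gev_h g0 x"
    if "x \<in> U" for x
  proof -
    from that have cdf0: "gev_cdf g0 x = exp (- gev_t g0 x)"
      by (simp add: U_def gev_cdf_eq_exp)
    with gev_t_pos[of g0 x] have "0 < gev_cdf g0 x" "gev_cdf g0 x < 1"
      by simp_all
    then show support: "0 < 1 + g * ((x - m) / s)"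
      using eq[of x] by (auto simp: gev_cdf_def split: if_splits)
    from eq[of x] show "gev_h g ((x - m) / s) = gev_h g0 x"
      by (simp add: cdf0 gev_cdf_eq_exp[OF support] gev_t_def)
  qed
  have affine: "s + g * (x - m) = 1 + g0 * x" if "x \<in> U" for x
  proof -
    have "((\<lambda>x. (x - m) / s) has_real_derivative 1 / s) (at x)"
      using s by (auto intro!: derivative_eq_intros)
    from DERIV_chain2[OF gev_h_has_derivative[OF support[OF that]] this]
    have "((\<lambda>x. gev_h g ((x - m) / s)) has_real_derivative 1 / (1 + g * ((x - m) / s)) * (1 / s)) (at x)" .
    then have "(gev_h g0 has_real_derivative 1 / (1 + g * ((x - m) / s)) * (1 / s)) (at x)"
      using \<open>open U\<close> that h_eq by (rule has_field_derivative_transform_within_open)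
    from DERIV_unique[OF this gev_h_has_derivative] that support[OF that] s show ?thesis
      by (simp add: U_def field_simps)
  qed
  have "0 \<in> U"
    by (simp add: U_def)
  then obtain e where "0 < e" and "ball 0 e \<subseteq> U"
    using \<open>open U\<close> open_contains_ball by blast
  then have "e / 2 \<in> U"
    by auto
  have "gev_h g (- m / s) = 0"
    using h_eq[OF \<open>0 \<in> U\<close>] by (simp add: gev_h_def)
  with support[OF \<open>0 \<in> U\<close>] s have "m = 0"
    by (cases "g = 0") (auto simp: gev_h_def)
  with affine[OF \<open>0 \<in> U\<close>] have "s = 1"
    by simp
  with affine[OF \<open>e / 2 \<in> U\<close>] \<open>m = 0\<close> \<open>0 < e\<close> have "g = g0"
    by simp
  with \<open>m = 0\<close> \<open>s = 1\<close> show ?thesis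
    by simp
qed

lemma AE_gev_density_param_eq_iff:
  assumes "0 < s"
  shows "(AE x in lborel. gev_density_param (g, m, s) x = gev_density g0 x) \<longleftrightarrow> (g, m, s) = (g0, 0, 1)"
proof
  assume "AE x in lborel. gev_density_param (g, m, s) x = gev_density g0 x"
  then have "(\<lambda>x. gev_cdf g ((x - m) / s)) = gev_cdf g0"
    by (rule primitive_eq_if_AE_eq[OF primitive_off_finite_gev_cdf_param[OF assms]
          gev_density_param_measurable gev_density_param_nonneg[OF assms] gev_cdf_param_at_bot[OF assms]
          primitive_off_finite_gev_cdf gev_density_measurable gev_density_nonneg gev_cdf_at_bot])
  then have "gev_cdf g ((x - m) / s) = gev_cdf g0 x" for x
    by (simp add: fun_eq_iff)
  from gev_cdf_affine_eq_imp[OF assms this] show "(g, m, s) = (g0, 0, 1)"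
    by simp
qed simp

lemma gev_gibbs_inequality:
  assumes "-1 < g0" and "-1 < g" and "0 < s"
  shows "ext_integral (GEV g0) (gev_loglik_param (g, m, s)) \<le> ext_integral (GEV g0) (gev_loglik_param (g0, 0, 1))"
    and "ext_integral (GEV g0) (gev_loglik_param (g, m, s)) = ext_integral (GEV g0) (gev_loglik_param (g0, 0, 1))
           \<longleftrightarrow> (AE x in lborel. gev_density_param (g, m, s) x = gev_density g0 x)"
proof -
  have bdd: "bdd_above (range (gev_density g0))" "bdd_above (range (gev_density_param (g, m, s)))"
    using assms gev_density_param_bdd_above[of g0 1 0] gev_density_param_bdd_above[of g s m] by simp_all
  have total: "(\<integral>\<^sup>+x. ennreal (gev_density g0 x) \<partial>lborel) = 1"
    "(\<integral>\<^sup>+x. ennreal (gev_density_param (g, m, s) x) \<partial>lborel) \<le> 1"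
    using nn_integral_gev_density_param[of 1 g0 0] nn_integral_gev_density_param[OF assms(3)] by simp_all
  note gibbs = gibbs_inequality[OF _ _ gev_density_nonneg gev_density_param_nonneg[OF assms(3)] bdd total
      gev_entropy_finite[OF assms(1), unfolded GEV_eq_density]]
  show "ext_integral (GEV g0) (gev_loglik_param (g, m, s)) \<le> ext_integral (GEV g0) (gev_loglik_param (g0, 0, 1))"
    and "ext_integral (GEV g0) (gev_loglik_param (g, m, s)) = ext_integral (GEV g0) (gev_loglik_param (g0, 0, 1))
           \<longleftrightarrow> (AE x in lborel. gev_density_param (g, m, s) x = gev_density g0 x)"
    using gibbs assms(3) by (simp_all add: GEV_eq_density gev_loglik_param_eq_eln)
qed

theorem lemma3p1:
  fixes \<gamma>\<^sub>0 \<gamma> \<mu> \<sigma> :: real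
  assumes "\<gamma>\<^sub>0 > -1"
    and "\<gamma> > -1" and "\<sigma> > 0"
  shows "ext_integral (GEV \<gamma>\<^sub>0) (gev_loglik_param (\<gamma>, \<mu>, \<sigma>))
           \<le> ext_integral (GEV \<gamma>\<^sub>0) (gev_loglik_param (\<gamma>\<^sub>0, 0, 1))
         \<and> (ext_integral (GEV \<gamma>\<^sub>0) (gev_loglik_param (\<gamma>, \<mu>, \<sigma>))
           = ext_integral (GEV \<gamma>\<^sub>0) (gev_loglik_param (\<gamma>\<^sub>0, 0, 1))
         \<longleftrightarrow> (\<gamma>, \<mu>, \<sigma>) = (\<gamma>\<^sub>0, 0, 1))"
  using gev_gibbs_inequality[OF assms] AE_gev_density_param_eq_iff[OF assms(3)] by simp

end
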